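(* Let $\mu\in\mathcal{P}(\mathbb{R}^{dT})$, let $(X^{(n)})_{n\in\mathbb{N}}$ be i.i.d. samples from $\mu$ with empirical measures $\mu^N=\frac1N\sum_{n=1}^N\delta_{X^{(n)}}$, and let $\Phi^N_t$ denote either the uniform partition $\hat\Phi^N_t$ or the non-uniform partition $\check\Phi^N_t$. For $t=1,\dots,T-1$ set \[\tilde Y_t=N^{-1}\sum_{G\in\Phi^N_t}(N\mu^N(G))^{1-\frac1d}.\] Then for all $t=1,\dots,T-1$, $N\in\mathbb{N}$ and $x>0$, \[\mathbb{P}\big[|\tilde Y_t-\mathbb{E}[\tilde Y_t]|\ge x\big]\le2e^{-2Nx^2}.\]
   Context: Fix integers $d\ge1$, $T\ge2$. For Borel $G\subseteq\mathbb{R}^{dt}$, $\mu^N(G)=\frac1N\#\{n\le N: X^{(n)}_{1:t}\in G\}$, where $X_{1:t}$ denotes the first $t$ $\mathbb{R}^d$-valued coordinates. Grids: $\Delta_N=N^{-1/(dT)}$, $m=\lceil1/\Delta_N\rceil$; $\hat\Phi^N_t=\{[0,\frac1m]^{dt}+\frac1m\mathbf z:\mathbf z\in\mathbb{Z}^{dt}\}$; with $\mathcal{A}^t_0=[-1,1]^{dt}$, $\mathcal{A}^t_j=[-2^j,2^j]^{dt}\setminus[-2^{j-1},2^{j-1}]^{dt}$ ($j\ge1$), $\check\Phi^N_t=\bigcup_{j\ge0}\{[0,\frac{2^{j-1}}m]^{dt}+\frac{2^{j-1}}m\mathbf z\ \text{contained in (the closure of)}\ \mathcal{A}^t_j:\mathbf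 z\in\mathbb{Z}^{dt}\}$. Each point is regarded as belonging to exactly one cell of the partition (points on common boundaries are assigned to one cell). *)

theory Defs
  imports "HOL-Probability.Probability"
begin

text \<open>Points of R^k are represented as extensional functions nat => real
  supported on {..<k} (the space of the product measure PiM {..<k} (%_. borel)).
  Cells are half-open boxes (each point lies in exactly one cell).\<close>

definition hbox :: "nat \<Rightarrow> real \<Rightarrow> (nat \<Rightarrow> int) \<Rightarrow> (nat \<Rightarrow> real) set" where
  "hbox k s z = {y \<in> PiE {..<k} (\<lambda>_. UNIV).
      \<forall>i<k. s * real_of_int (z i) \<le> y i \<and> y i < s * (real_of_int (z i) + 1)}"

definition cbox_cell :: "nat \<Rightarrow> real \<Rightarrow> (nat \<Rightarrow> int) \<Rightarrow> (nat \<Rightarrow> real) set" where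
  "cbox_cell k s z = {y \<in> PiE {..<k} (\<lambda>_. UNIV).
      \<forall>i<k. s * real_of_int (z i) \<le> y i \<and> y i \<le> s * (real_of_int (z i) + 1)}"

definition cube :: "nat \<Rightarrow> real \<Rightarrow> (nat \<Rightarrow> real) set" where
  "cube k r = {y \<in> PiE {..<k} (\<lambda>_. UNIV). \<forall>i<k. - r \<le> y i \<and> y i \<le> r}"

definition annulus :: "nat \<Rightarrow> nat \<Rightarrow> (nat \<Rightarrow> real) set" where
  "annulus k j = (if j = 0 then cube k 1 else cube k (2 ^ j) - cube k (2 ^ (j - 1)))"

definition grid_m :: "nat \<Rightarrow> nat \<Rightarrow> nat \<Rightarrow> nat" where
  "grid_m d T N = nat \<lceil>1 / (real N powr (- 1 / real (d * T)))\<rceil>"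

definition unif_part :: "nat \<Rightarrow> nat \<Rightarrow> nat \<Rightarrow> nat \<Rightarrow> (nat \<Rightarrow> real) set set" where
  "unif_part d T N t = {hbox (d * t) (1 / real (grid_m d T N)) z | z. True}"

definition nonunif_part :: "nat \<Rightarrow> nat \<Rightarrow> nat \<Rightarrow> nat \<Rightarrow> (nat \<Rightarrow> real) set set" where
  "nonunif_part d T N t =
     {hbox (d * t) ((2::real) powi (int j - 1) / real (grid_m d T N)) z | j z.
        cbox_cell (d * t) ((2::real) powi (int j - 1) / real (grid_m d T N)) z
          \<subseteq> closure (annulus (d * t) j)}"

definition emp_meas :: "nat \<Rightarrow> nat \<Rightarrow> nat \<Rightarrow> (nat \<Rightarrow> 'a \<Rightarrow> (nat \<Rightarrow> real)) \<Rightarrow> 'a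
     \<Rightarrow> (nat \<Rightarrow> real) set \<Rightarrow> real" where
  "emp_meas d t N X \<omega> G = real (card {n \<in> {1..N}. restrict (X n \<omega>) {..<d * t} \<in> G}) / real N"

definition Ytil :: "nat \<Rightarrow> nat \<Rightarrow> nat \<Rightarrow> (nat \<Rightarrow> real) set set
     \<Rightarrow> (nat \<Rightarrow> 'a \<Rightarrow> (nat \<Rightarrow> real)) \<Rightarrow> 'a \<Rightarrow> real" where
  "Ytil d t N \<Phi> X \<omega> =
     (1 / real N) * infsum (\<lambda>G. (real N * emp_meas d t N X \<omega> G) powr (1 - 1 / real d)) \<Phi>"

end

theory Submission
  imports Defs
begin

text \<open>The statistic depends on the N samples only through the cell each sample falls into,
  and moving a single sample changes one cell count by -1 and another by +1. Since
  c \<mapsto> c powr (1 - 1/d) is nondecreasing and subadditive, each such move changes the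
  statistic by at most 1/N. McDiarmid's bounded-differences inequality, proved here by applying
  Hoeffding's lemma coordinate by coordinate, then gives the bound
  2 exp (-2 x^2 / (N (1/N)^2)) = 2 exp (-2 N x^2).\<close>

section \<open>McDiarmid's inequality\<close>

lemma bounded_differences_imp_bounded:
  fixes M :: "'i \<Rightarrow> 'a measure" and F :: "('i \<Rightarrow> 'a) \<Rightarrow> real"
  assumes "finite I"
    and diff: "\<And>i x y y'. i \<in> I \<Longrightarrow> x \<in> space (PiM I M) \<Longrightarrow> y \<in> space (M i) \<Longrightarrow>
                 y' \<in> space (M i) \<Longrightarrow> \<bar>F (x(i := y)) - F (x(i := y'))\<bar> \<le> c"
    and x: "x \<in> space (PiM I M)" and x0: "x0 \<in> space (PiM I M)"
  shows "\<bar>F x - F x0\<bar> \<le> c * real (card I)"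
proof -
  have hybrid: "\<bar>F (\<lambda>i. if i \<in> J then x i else x0 i) - F x0\<bar> \<le> c * real (card J)"
    if "J \<subseteq> I" for J
    using finite_subset[OF that \<open>finite I\<close>] that
  proof (induction J rule: finite_induct)
    case empty
    then show ?case by simp
  next
    case (insert j J)
    define h where "h = (\<lambda>i. if i \<in> J then x i else x0 i)"
    have j: "j \<in> I" using insert.prems by simp
    have h: "h \<in> space (PiM I M)"
      using x x0 by (auto simp: h_def space_PiM PiE_def Pi_def extensional_def)
    have "(\<lambda>i. if i \<in> insert j J then x i else x0 i) = h(j := x j)" "h(j := x0 j) = h"
      using insert.hyps by (auto simp: h_def)
    moreover have "x j \<in> space (M j)" "x0 j \<in> space (M j)"
      using x x0 j by (auto simp: space_PiM)
    ultimately have "\<bar>F (\<lambda>i. if i \<in> insert j J then x i else x0 i) - F h\<bar> \<le> c"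
      using diff[OF j h] by metis
    moreover have "\<bar>F h - F x0\<bar> \<le> c * real (card J)"
      using insert by (simp add: h_def)
    ultimately show ?case
      using insert.hyps by (simp add: distrib_left)
  qed
  have "(\<lambda>i. if i \<in> I then x i else x0 i) = x"
    using x x0 by (auto simp: space_PiM PiE_def extensional_def)
  with hybrid[OF order_refl] show ?thesis by simp
qed

lemma (in prob_space) Hoeffdings_lemma_bounded_oscillation:
  assumes [measurable]: "f \<in> borel_measurable M"
    and osc: "\<And>y y'. y \<in> space M \<Longrightarrow> y' \<in> space M \<Longrightarrow> \<bar>f y - f y'\<bar> \<le> c"
    and "l > 0"
  shows "(\<integral>\<^sup>+y. ennreal (exp (l * (f y - expectation f))) \<partial>M) \<le> ennreal (exp (l\<^sup>2 * c\<^sup>2 / 8))"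
proof -
  obtain y0 where y0: "y0 \<in> space M" using not_empty by blast
  define a where "a = Inf (f ` space M)"
  have "f y0 - c \<le> f y" if "y \<in> space M" for y
    using osc[OF that y0] by linarith
  then have "bdd_below (f ` space M)"
    by (intro bdd_belowI[where m = "f y0 - c"]) blast
  then have "a \<le> f y" if "y \<in> space M" for y
    unfolding a_def using that by (intro cInf_lower) simp_all
  moreover have "f y \<le> a + c" if "y \<in> space M" for y
  proof -
    have "f y - c \<le> f y'" if "y' \<in> space M" for y'
      using osc[OF \<open>y \<in> space M\<close> that] by linarith
    then have "f y - c \<le> a"
      unfolding a_def using y0 by (intro cInf_greatest) auto
    then show ?thesis by simp
  qed
  ultimately have "AE y in M. f y \<in> {a..a + c}"
    by (intro AE_I2) simp
  then interpret interval_bounded_random_variable M f a "a + c"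
    by unfold_locales simp_all
  show ?thesis
    using Hoeffdings_lemma_nn_integral[OF \<open>l > 0\<close>] by simp
qed

definition coord_average :: "('i \<Rightarrow> 'a measure) \<Rightarrow> 'i \<Rightarrow> (('i \<Rightarrow> 'a) \<Rightarrow> real) \<Rightarrow> ('i \<Rightarrow> 'a) \<Rightarrow> real" where
  "coord_average M i F x = (\<integral>y. F (x(i := y)) \<partial>M i)"

context
  fixes M :: "'i \<Rightarrow> 'a measure" and I :: "'i set" and i :: 'i
    and F :: "('i \<Rightarrow> 'a) \<Rightarrow> real" and c :: real
  assumes prob_spaces: "\<And>j. prob_space (M j)" and "finite I" and "i \<notin> I"
    and F_meas[measurable]: "F \<in> borel_measurable (PiM (insert i I) M)"
    and F_diff: "\<And>j x y y'. j \<in> insert i I \<Longrightarrow> x \<in> space (PiM (insert i I) M) \<Longrightarrow>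
                   y \<in> space (M j) \<Longrightarrow> y' \<in> space (M j) \<Longrightarrow> \<bar>F (x(j := y)) - F (x(j := y'))\<bar> \<le> c"
begin

interpretation Mi: prob_space "M i" by (rule prob_spaces)
interpretation PP: product_prob_space M UNIV by (rule product_prob_spaceI[OF prob_spaces])
interpretation PJ: prob_space "PiM (insert i I) M" by (rule prob_space_PiM[OF prob_spaces])

lemma fun_upd_in_space_PiM_insert:
  assumes "x \<in> space (PiM I M)" "y \<in> space (M i)"
  shows "x(i := y) \<in> space (PiM (insert i I) M)"
  using measurable_space[OF measurable_component_update[OF assms(1) \<open>i \<notin> I\<close>] assms(2)] .

lemma bounded_differences_bound:
  obtains B where "\<And>x. x \<in> space (PiM (insert i I) M) \<Longrightarrow> \<bar>F x\<bar> \<le> B"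
proof -
  obtain x0 where x0: "x0 \<in> space (PiM (insert i I) M)" using PJ.not_empty by blast
  have "\<bar>F x\<bar> \<le> \<bar>F x0\<bar> + c * real (card (insert i I))" if "x \<in> space (PiM (insert i I) M)" for x
  proof -
    from that \<open>finite I\<close> x0 have "\<bar>F x - F x0\<bar> \<le> c * real (card (insert i I))"
      by (intro bounded_differences_imp_bounded[of "insert i I" M F c, OF _ F_diff]) simp_all
    then show ?thesis by linarith
  qed
  then show thesis by (rule that)
qed

lemma measurable_coord_section:
  "x \<in> space (PiM I M) \<Longrightarrow> (\<lambda>y. F (x(i := y))) \<in> borel_measurable (M i)"
  using measurable_comp[OF measurable_component_update[OF _ \<open>i \<notin> I\<close>] F_meas]
  by (simp add: comp_def)

lemma integrable_coord_section:
  assumes "x \<in> space (PiM I M)"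
  shows "integrable (M i) (\<lambda>y. F (x(i := y)))"
proof -
  obtain B where "\<And>x. x \<in> space (PiM (insert i I) M) \<Longrightarrow> \<bar>F x\<bar> \<le> B"
    using bounded_differences_bound by blast
  then show ?thesis
    using assms by (intro Mi.integrable_const_bound[where B = B] measurable_coord_section AE_I2)
      (auto intro: fun_upd_in_space_PiM_insert)
qed

lemma measurable_coord_average: "coord_average M i F \<in> borel_measurable (PiM I M)"
  unfolding coord_average_def by measurable

lemma integral_PiM_insert_eq_coord_average:
  "(\<integral>x. F x \<partial>PiM (insert i I) M) = (\<integral>x. coord_average M i F x \<partial>PiM I M)"
proof -
  obtain B where "\<And>x. x \<in> space (PiM (insert i I) M) \<Longrightarrow> \<bar>F x\<bar> \<le> B"
    using bounded_differences_bound by blast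
  then have "integrable (PiM (insert i I) M) F"
    by (intro PJ.integrable_const_bound[where B = B] AE_I2) auto
  then show ?thesis
    unfolding coord_average_def by (rule PP.product_integral_insert[OF \<open>finite I\<close> \<open>i \<notin> I\<close>])
qed

lemma coord_average_bounded_differences:
  assumes j: "j \<in> I" and x: "x \<in> space (PiM I M)" and y: "y \<in> space (M j)" "y' \<in> space (M j)"
  shows "\<bar>coord_average M i F (x(j := y)) - coord_average M i F (x(j := y'))\<bar> \<le> c"
proof -
  have xy: "x(j := y) \<in> space (PiM I M)" "x(j := y') \<in> space (PiM I M)"
    using j x y by (auto simp: space_PiM PiE_def extensional_def)
  have swap: "(x(j := u))(i := z) = (x(i := z))(j := u)" for u z
    using j \<open>i \<notin> I\<close> by (auto simp: fun_eq_iff)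
  let ?h = "\<lambda>z. F ((x(j := y))(i := z)) - F ((x(j := y'))(i := z))"
  have "coord_average M i F (x(j := y)) - coord_average M i F (x(j := y')) = (\<integral>z. ?h z \<partial>M i)"
    unfolding coord_average_def
    by (rule Bochner_Integration.integral_diff[symmetric]) (auto intro!: integrable_coord_section xy)
  also have "\<bar>\<dots>\<bar> \<le> (\<integral>z. \<bar>?h z\<bar> \<partial>M i)"
    using integral_norm_bound[of "M i" ?h] by simp
  also have "\<dots> \<le> (\<integral>z. c \<partial>M i)"
  proof (rule integral_mono)
    show "integrable (M i) (\<lambda>z. \<bar>?h z\<bar>)"
      by (intro integrable_abs Bochner_Integration.integrable_diff integrable_coord_section xy)
    show "\<bar>?h z\<bar> \<le> c" if "z \<in> space (M i)" for z
      unfolding swap using that j x y by (intro F_diff fun_upd_in_space_PiM_insert) auto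
  qed simp
  finally show ?thesis
    using Mi.prob_space by simp
qed

text \<open>Integrating out the coordinate i first: for fixed other coordinates the section of F
  oscillates by at most c, so Hoeffding's lemma bounds the inner integral.\<close>

lemma nn_integral_exp_PiM_insert_le:
  assumes "l > 0"
  shows "(\<integral>\<^sup>+x. ennreal (exp (l * (F x - E))) \<partial>PiM (insert i I) M)
      \<le> (\<integral>\<^sup>+x. ennreal (exp (l * (coord_average M i F x - E))) \<partial>PiM I M) * ennreal (exp (l\<^sup>2 * c\<^sup>2 / 8))"
proof -
  let ?G = "coord_average M i F"
  have section_mgf: "(\<integral>\<^sup>+y. ennreal (exp (l * (F (x(i := y)) - ?G x))) \<partial>M i) \<le> ennreal (exp (l\<^sup>2 * c\<^sup>2 / 8))"
    if x: "x \<in> space (PiM I M)" for x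
    unfolding coord_average_def
  proof (rule Mi.Hoeffdings_lemma_bounded_oscillation[OF measurable_coord_section[OF x] _ \<open>l > 0\<close>])
    fix y y' assume y: "y \<in> space (M i)" and y': "y' \<in> space (M i)"
    show "\<bar>F (x(i := y)) - F (x(i := y'))\<bar> \<le> c"
      using F_diff[OF insertI1 fun_upd_in_space_PiM_insert[OF x y] y y'] by (simp only: fun_upd_upd)
  qed
  have "(\<integral>\<^sup>+x. ennreal (exp (l * (F x - E))) \<partial>PiM (insert i I) M)
      = (\<integral>\<^sup>+x. (\<integral>\<^sup>+y. ennreal (exp (l * (F (x(i := y)) - E))) \<partial>M i) \<partial>PiM I M)"
    by (rule PP.product_nn_integral_insert[OF \<open>finite I\<close> \<open>i \<notin> I\<close>]) measurable
  also have "\<dots> = (\<integral>\<^sup>+x. ennreal (exp (l * (?G x - E)))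
                     * (\<integral>\<^sup>+y. ennreal (exp (l * (F (x(i := y)) - ?G x))) \<partial>M i) \<partial>PiM I M)"
  proof (rule nn_integral_cong)
    fix x assume x: "x \<in> space (PiM I M)"
    have "(\<integral>\<^sup>+y. ennreal (exp (l * (F (x(i := y)) - E))) \<partial>M i)
        = (\<integral>\<^sup>+y. ennreal (exp (l * (?G x - E))) * ennreal (exp (l * (F (x(i := y)) - ?G x))) \<partial>M i)"
      by (rule nn_integral_cong) (simp add: ennreal_mult[symmetric] exp_add[symmetric] algebra_simps)
    also have "\<dots> = ennreal (exp (l * (?G x - E))) * (\<integral>\<^sup>+y. ennreal (exp (l * (F (x(i := y)) - ?G x))) \<partial>M i)"
      by (rule nn_integral_cmult) (use measurable_coord_section[OF x] in measurable)
    finally show "(\<integral>\<^sup>+y. ennreal (exp (l * (F (x(i := y)) - E))) \<partial>M i) = \<dots>" .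
  qed
  also have "\<dots> \<le> (\<integral>\<^sup>+x. ennreal (exp (l * (?G x - E))) * ennreal (exp (l\<^sup>2 * c\<^sup>2 / 8)) \<partial>PiM I M)"
    by (rule nn_integral_mono) (auto intro!: mult_left_mono section_mgf)
  also have "\<dots> = (\<integral>\<^sup>+x. ennreal (exp (l * (?G x - E))) \<partial>PiM I M) * ennreal (exp (l\<^sup>2 * c\<^sup>2 / 8))"
    by (rule nn_integral_multc) (use measurable_coord_average in measurable)
  finally show ?thesis .
qed

end

lemma mcdiarmid_mgf_bound:
  fixes M :: "'i \<Rightarrow> 'a measure" and F :: "('i \<Rightarrow> 'a) \<Rightarrow> real"
  assumes P: "\<And>i. prob_space (M i)" and "finite I"
    and "F \<in> borel_measurable (PiM I M)"
    and "\<And>i x y y'. i \<in> I \<Longrightarrow> x \<in> space (PiM I M) \<Longrightarrow> y \<in> space (M i) \<Longrightarrow>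
           y' \<in> space (M i) \<Longrightarrow> \<bar>F (x(i := y)) - F (x(i := y'))\<bar> \<le> c"
    and "l > 0"
  shows "(\<integral>\<^sup>+x. ennreal (exp (l * (F x - (\<integral>x. F x \<partial>PiM I M)))) \<partial>PiM I M)
           \<le> ennreal (exp (l\<^sup>2 * c\<^sup>2 * real (card I) / 8))"
  using \<open>finite I\<close> assms(3,4)
proof (induction I arbitrary: F rule: finite_induct)
  case empty
  have "(\<integral>x. F x \<partial>PiM {} M) = F (\<lambda>_. undefined)"
    by (simp add: PiM_empty lebesgue_integral_count_space_finite)
  then show ?case
    by (simp add: PiM_empty nn_integral_count_space_finite)
next
  case (insert i I)
  let ?G = "coord_average M i F"
  define E where "E = (\<integral>x. ?G x \<partial>PiM I M)"
  have G_diff: "\<bar>?G (x(j := y)) - ?G (x(j := y'))\<bar> \<le> c"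
    if "j \<in> I" "x \<in> space (PiM I M)" "y \<in> space (M j)" "y' \<in> space (M j)" for j x y y'
    using coord_average_bounded_differences[OF P insert.hyps insert.prems that] .
  have IH: "(\<integral>\<^sup>+x. ennreal (exp (l * (?G x - E))) \<partial>PiM I M) \<le> ennreal (exp (l\<^sup>2 * c\<^sup>2 * real (card I) / 8))"
    unfolding E_def
    by (rule insert.IH[OF measurable_coord_average[OF P insert.hyps insert.prems] G_diff])
  have "(\<integral>\<^sup>+x. ennreal (exp (l * (F x - E))) \<partial>PiM (insert i I) M)
      \<le> (\<integral>\<^sup>+x. ennreal (exp (l * (?G x - E))) \<partial>PiM I M) * ennreal (exp (l\<^sup>2 * c\<^sup>2 / 8))"
    by (rule nn_integral_exp_PiM_insert_le[OF P insert.hyps insert.prems \<open>l > 0\<close>])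
  also have "\<dots> \<le> ennreal (exp (l\<^sup>2 * c\<^sup>2 * real (card I) / 8)) * ennreal (exp (l\<^sup>2 * c\<^sup>2 / 8))"
    using IH by (rule mult_right_mono) simp
  also have "\<dots> = ennreal (exp (l\<^sup>2 * c\<^sup>2 * real (card (insert i I)) / 8))"
    using insert.hyps by (simp add: ennreal_mult[symmetric] exp_add[symmetric] field_simps)
  finally show ?case
    by (simp only: E_def integral_PiM_insert_eq_coord_average[OF P insert.hyps insert.prems])
qed

lemma mcdiarmid_upper_tail:
  fixes M :: "'i \<Rightarrow> 'a measure" and F :: "('i \<Rightarrow> 'a) \<Rightarrow> real"
  assumes P: "\<And>i. prob_space (M i)" and "finite I" "I \<noteq> {}"
    and F_meas[measurable]: "F \<in> borel_measurable (PiM I M)"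
    and F_diff: "\<And>i x y y'. i \<in> I \<Longrightarrow> x \<in> space (PiM I M) \<Longrightarrow> y \<in> space (M i) \<Longrightarrow>
                   y' \<in> space (M i) \<Longrightarrow> \<bar>F (x(i := y)) - F (x(i := y'))\<bar> \<le> c"
    and "c > 0" "e > 0"
  shows "measure (PiM I M) {x \<in> space (PiM I M). F x - (\<integral>x. F x \<partial>PiM I M) \<ge> e}
           \<le> exp (- 2 * e\<^sup>2 / (c\<^sup>2 * real (card I)))"
proof -
  interpret prob_space "PiM I M" by (rule prob_space_PiM[OF P])
  define S where "S = c\<^sup>2 * real (card I)"
  define E where "E = (\<integral>x. F x \<partial>PiM I M)"
  define l where "l = 4 * e / S" \<comment> \<open>minimises the Chernoff exponent - l e + l^2 S / 8\<close>
  have "S > 0" using \<open>c > 0\<close> \<open>finite I\<close> \<open>I \<noteq> {}\<close> by (simp add: S_def card_gt_0_iff)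
  then have "l > 0" using \<open>e > 0\<close> by (simp add: l_def)
  have mgf: "(\<integral>\<^sup>+x. ennreal (exp (l * (F x - E))) \<partial>PiM I M) \<le> ennreal (exp (l\<^sup>2 * S / 8))"
    using mcdiarmid_mgf_bound[OF P \<open>finite I\<close> F_meas F_diff \<open>l > 0\<close>]
    unfolding E_def S_def by (simp only: mult.assoc)
  have "ennreal (prob {x \<in> space (PiM I M). F x - E \<ge> e})
      \<le> ennreal (exp (- l * e)) * (\<integral>\<^sup>+x. ennreal (exp (l * (F x - E))) * indicator (space (PiM I M)) x \<partial>PiM I M)"
    unfolding emeasure_eq_measure[symmetric] by (rule Chernoff_ineq_nn_integral_ge[OF \<open>l > 0\<close>]) measurable
  also have "(\<integral>\<^sup>+x. ennreal (exp (l * (F x - E))) * indicator (space (PiM I M)) x \<partial>PiM I M)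
           = (\<integral>\<^sup>+x. ennreal (exp (l * (F x - E))) \<partial>PiM I M)"
    by (rule nn_integral_cong) simp
  also have "ennreal (exp (- l * e)) * \<dots> \<le> ennreal (exp (- l * e)) * ennreal (exp (l\<^sup>2 * S / 8))"
    using mgf by (rule mult_left_mono) simp
  also have "\<dots> = ennreal (exp (- l * e + l\<^sup>2 * S / 8))"
    by (simp add: ennreal_mult[symmetric] exp_add[symmetric])
  also have "- l * e + l\<^sup>2 * S / 8 = - 2 * e\<^sup>2 / S"
    using \<open>S > 0\<close> by (simp add: l_def field_simps power2_eq_square)
  finally show ?thesis
    unfolding E_def S_def by (subst (asm) ennreal_le_iff) auto
qed

theorem mcdiarmid_inequality:
  fixes M :: "'i \<Rightarrow> 'a measure" and F :: "('i \<Rightarrow> 'a) \<Rightarrow> real"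
  assumes P: "\<And>i. prob_space (M i)" and "finite I" "I \<noteq> {}"
    and F_meas[measurable]: "F \<in> borel_measurable (PiM I M)"
    and F_diff: "\<And>i x y y'. i \<in> I \<Longrightarrow> x \<in> space (PiM I M) \<Longrightarrow> y \<in> space (M i) \<Longrightarrow>
                   y' \<in> space (M i) \<Longrightarrow> \<bar>F (x(i := y)) - F (x(i := y'))\<bar> \<le> c"
    and "c > 0" "e > 0"
  shows "measure (PiM I M) {x \<in> space (PiM I M). \<bar>F x - (\<integral>x. F x \<partial>PiM I M)\<bar> \<ge> e}
           \<le> 2 * exp (- 2 * e\<^sup>2 / (c\<^sup>2 * real (card I)))"
proof -
  interpret prob_space "PiM I M" by (rule prob_space_PiM[OF P])
  define E where "E = (\<integral>x. F x \<partial>PiM I M)"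
  define bound where "bound = exp (- 2 * e\<^sup>2 / (c\<^sup>2 * real (card I)))"
  have upper: "prob {x \<in> space (PiM I M). F x - E \<ge> e} \<le> bound"
    unfolding E_def bound_def by (rule mcdiarmid_upper_tail[OF assms])
  have "prob {x \<in> space (PiM I M). - F x - (\<integral>x. - F x \<partial>PiM I M) \<ge> e} \<le> bound"
    unfolding bound_def
  proof (rule mcdiarmid_upper_tail[OF P \<open>finite I\<close> \<open>I \<noteq> {}\<close> _ _ \<open>c > 0\<close> \<open>e > 0\<close>])
    show "(\<lambda>x. - F x) \<in> borel_measurable (PiM I M)" by measurable
    show "\<bar>- F (x(i := y)) - - F (x(i := y'))\<bar> \<le> c"
      if "i \<in> I" "x \<in> space (PiM I M)" "y \<in> space (M i)" "y' \<in> space (M i)" for i x y y'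
      using F_diff[OF that] by (simp add: abs_minus_commute)
  qed
  then have lower: "prob {x \<in> space (PiM I M). E - F x \<ge> e} \<le> bound"
    unfolding E_def by (simp add: algebra_simps)
  have "{x \<in> space (PiM I M). \<bar>F x - E\<bar> \<ge> e}
      = {x \<in> space (PiM I M). F x - E \<ge> e} \<union> {x \<in> space (PiM I M). E - F x \<ge> e}"
    by auto
  then have "prob {x \<in> space (PiM I M). \<bar>F x - E\<bar> \<ge> e}
      \<le> prob {x \<in> space (PiM I M). F x - E \<ge> e} + prob {x \<in> space (PiM I M). E - F x \<ge> e}"
    by (simp add: measure_Un_le)
  with upper lower show ?thesis
    unfolding E_def bound_def by linarith
qed

section \<open>Cell statistics of samples\<close>

lemma powr_add_le_add_powr:
  fixes a b e :: real
  assumes "0 \<le> a" "0 \<le> b" "0 \<le> e" "e \<le> 1"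
  shows "(a + b) powr e \<le> a powr e + b powr e"
proof (cases "a + b = 0")
  case True
  with assms show ?thesis by simp
next
  case False
  define s where "s = a + b"
  have "s > 0" using assms False by (simp add: s_def)
  have le_powr: "u / s \<le> (u / s) powr e" if "0 \<le> u" "u \<le> s" for u
  proof (cases "u = 0")
    case False
    then have "(u / s) powr 1 \<le> (u / s) powr e"
      using that \<open>s > 0\<close> assms by (intro powr_mono') simp_all
    with False that \<open>s > 0\<close> show ?thesis by simp
  qed simp
  have "1 = a / s + b / s"
    using \<open>s > 0\<close> by (simp add: s_def add_divide_distrib[symmetric])
  also have "\<dots> \<le> (a / s) powr e + (b / s) powr e"
    using assms by (intro add_mono le_powr) (simp_all add: s_def)
  also have "\<dots> = (a powr e + b powr e) / s powr e"
    using assms \<open>s > 0\<close> by (simp add: powr_divide add_divide_distrib)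
  finally show ?thesis
    using \<open>s > 0\<close> by (simp add: s_def le_divide_eq)
qed

lemma powr_plus_one_increment:
  fixes c e :: real
  assumes "0 \<le> c" "0 \<le> e" "e \<le> 1"
  shows "0 \<le> (c + 1) powr e - c powr e" "(c + 1) powr e - c powr e \<le> 1"
  using powr_mono2[of e c "c + 1"] powr_add_le_add_powr[of c 1 e] assms by simp_all

text \<open>Samples are labelled by the cell containing them (None outside all cells). The labels
  range over a countable set, which is what makes the statistic measurable.\<close>

definition cell_of :: "'b set set \<Rightarrow> 'b \<Rightarrow> 'b set option" where
  "cell_of \<Phi> p = (if \<exists>G\<in>\<Phi>. p \<in> G then Some (SOME G. G \<in> \<Phi> \<and> p \<in> G) else None)"

lemma cell_of_range: "cell_of \<Phi> p \<in> insert None (Some ` \<Phi>)"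
  unfolding cell_of_def by (auto intro: someI2_ex)

lemma cell_of_eq_Some_iff:
  assumes "disjoint \<Phi>" "G \<in> \<Phi>"
  shows "cell_of \<Phi> p = Some G \<longleftrightarrow> p \<in> G"
proof -
  have "(SOME G. G \<in> \<Phi> \<and> p \<in> G) = G" if "p \<in> G"
    using assms that by (intro some_equality) (auto dest: disjointD)
  moreover have "p \<in> (SOME G. G \<in> \<Phi> \<and> p \<in> G)" if "\<exists>G\<in>\<Phi>. p \<in> G"
    using that by (auto intro: someI2_ex)
  ultimately show ?thesis
    using assms(2) unfolding cell_of_def by auto
qed

lemma cell_of_eq_None_iff: "cell_of \<Phi> p = None \<longleftrightarrow> p \<notin> \<Union>\<Phi>"
  unfolding cell_of_def by auto

lemma measurable_cell_of:
  assumes "countable \<Phi>" "\<Phi> \<subseteq> sets S" "disjoint \<Phi>"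
  shows "cell_of \<Phi> \<in> measurable S (count_space (insert None (Some ` \<Phi>)))"
  unfolding measurable_count_space_eq_countable[OF countable_insert[OF countable_image[OF assms(1)]]]
proof (intro conjI ballI)
  show "cell_of \<Phi> \<in> space S \<rightarrow> insert None (Some ` \<Phi>)"
    by (intro Pi_I cell_of_range)
next
  fix a assume a: "a \<in> insert None (Some ` \<Phi>)"
  show "cell_of \<Phi> -` {a} \<inter> space S \<in> sets S"
  proof (cases a)
    case None
    then have "cell_of \<Phi> -` {a} \<inter> space S = space S - \<Union>\<Phi>"
      by (auto simp: cell_of_eq_None_iff)
    moreover have "\<Union>\<Phi> \<in> sets S" by (rule sets.countable_Union[OF assms(1,2)])
    ultimately show ?thesis by auto
  next
    case (Some G)
    with a have "G \<in> \<Phi>" by auto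
    then have G: "G \<in> sets S" using assms(2) by blast
    then have "G \<subseteq> space S" by (rule sets.sets_into_space)
    then have "cell_of \<Phi> -` {a} \<inter> space S = G"
      using Some cell_of_eq_Some_iff[OF assms(3) \<open>G \<in> \<Phi>\<close>] by auto
    with G show ?thesis by simp
  qed
qed

definition cell_count :: "nat \<Rightarrow> (nat \<Rightarrow> 'c option) \<Rightarrow> 'c \<Rightarrow> nat" where
  "cell_count N v G = card {n \<in> {1..N}. v n = Some G}"

definition cell_statistic :: "nat \<Rightarrow> real \<Rightarrow> 'c set \<Rightarrow> (nat \<Rightarrow> 'c option) \<Rightarrow> real" where
  "cell_statistic N e \<Phi> v = (1 / real N) * infsum (\<lambda>G. real (cell_count N v G) powr e) \<Phi>"

lemma cell_statistic_restrict: "cell_statistic N e \<Phi> (restrict v {1..N}) = cell_statistic N e \<Phi> v"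
  unfolding cell_statistic_def cell_count_def by (simp cong: conj_cong)

lemma cell_statistic_eq_sum:
  assumes "finite S" "Option.these (v ` {1..N}) \<subseteq> S"
  shows "cell_statistic N e \<Phi> v = (1 / real N) * (\<Sum>G\<in>\<Phi> \<inter> S. real (cell_count N v G) powr e)"
proof -
  have "cell_count N v G = 0" if "G \<notin> S" for G
  proof -
    have "Some G \<notin> v ` {1..N}"
      using that assms(2) in_these_eq[of G "v ` {1..N}"] by blast
    then have "v n \<noteq> Some G" if "n \<in> {1..N}" for n
      using that by (metis image_eqI)
    then show ?thesis by (simp add: cell_count_def)
  qed
  then have "infsum (\<lambda>G. real (cell_count N v G) powr e) \<Phi>
           = infsum (\<lambda>G. real (cell_count N v G) powr e) (\<Phi> \<inter> S)"
    by (intro infsum_cong_neutral) auto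
  then show ?thesis
    using assms(1) unfolding cell_statistic_def by simp
qed

lemma cell_count_fun_upd_None:
  assumes "i \<in> {1..N}" "v i = Some G0"
  shows "cell_count N v G = cell_count N (v(i := None)) G + (if G = G0 then 1 else 0)"
proof -
  have "{n \<in> {1..N}. v n = Some G}
      = {n \<in> {1..N}. (v(i := None)) n = Some G} \<union> (if G = G0 then {i} else {})"
    using assms by auto
  then show ?thesis
    unfolding cell_count_def by (auto simp: card_insert_if)
qed

lemma cell_statistic_remove_sample:
  assumes "0 \<le> e" "e \<le> 1" "i \<in> {1..N}"
  shows "0 \<le> cell_statistic N e \<Phi> v - cell_statistic N e \<Phi> (v(i := None))"
    and "cell_statistic N e \<Phi> v - cell_statistic N e \<Phi> (v(i := None)) \<le> 1 / real N"
proof -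
  let ?v0 = "v(i := None)"
  let ?S = "Option.these (v ` {1..N})"
  define \<delta> where "\<delta> = cell_statistic N e \<Phi> v - cell_statistic N e \<Phi> ?v0"
  have "0 \<le> \<delta> \<and> \<delta> \<le> 1 / real N"
  proof (cases "v i")
    case None
    then show ?thesis by (simp add: \<delta>_def fun_upd_idem)
  next
    case (Some G0)
    define k where "k = cell_count N ?v0 G0"
    have fin: "finite ?S" by (simp add: Option.these_def)
    have "?v0 ` {1..N} \<subseteq> insert None (v ` {1..N})" by auto
    then have sub: "Option.these (?v0 ` {1..N}) \<subseteq> ?S"
      by (auto simp: in_these_eq)
    have "\<delta> = (1 / real N) * (\<Sum>G\<in>\<Phi> \<inter> ?S. real (cell_count N v G) powr e - real (cell_count N ?v0 G) powr e)"
      unfolding \<delta>_def cell_statistic_eq_sum[OF fin order_refl] cell_statistic_eq_sum[OF fin sub]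
      by (simp add: sum_subtractf right_diff_distrib)
    also have "\<dots> = (1 / real N) * (\<Sum>G\<in>\<Phi> \<inter> ?S. if G = G0 then (real k + 1) powr e - real k powr e else 0)"
      by (intro arg_cong[where f = "\<lambda>s. (1 / real N) * s"] sum.cong)
        (auto simp: cell_count_fun_upd_None[of i N v, OF assms(3) Some] k_def)
    also have "\<dots> = (if G0 \<in> \<Phi> \<inter> ?S then (1 / real N) * ((real k + 1) powr e - real k powr e) else 0)"
      using fin by (simp add: sum.delta)
    finally show ?thesis
      using powr_plus_one_increment[of "real k" e] assms(1,2)
      by (auto simp: mult_le_cancel_left1 divide_simps)
  qed
  then show "0 \<le> \<delta>" "\<delta> \<le> 1 / real N" by auto
qed

lemma cell_statistic_bounded_differences:
  assumes "0 \<le> e" "e \<le> 1" "i \<in> {1..N}"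
  shows "\<bar>cell_statistic N e \<Phi> (v(i := a)) - cell_statistic N e \<Phi> (v(i := b))\<bar> \<le> 1 / real N"
  using cell_statistic_remove_sample[OF assms, of \<Phi> "v(i := a)"]
    cell_statistic_remove_sample[OF assms, of \<Phi> "v(i := b)"]
  by simp

lemma (in prob_space) deviation_prob_distr:
  fixes F :: "'b \<Rightarrow> real"
  assumes Y: "Y \<in> measurable M N" and F: "F \<in> borel_measurable N"
  shows "prob {\<omega> \<in> space M. \<bar>F (Y \<omega>) - expectation (\<lambda>\<omega>. F (Y \<omega>))\<bar> \<ge> x}
       = measure (distr M N Y) {y \<in> space N. \<bar>F y - (\<integral>y. F y \<partial>distr M N Y)\<bar> \<ge> x}"
proof -
  define C where "C = (\<integral>y. F y \<partial>distr M N Y)"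
  define S where "S = {y \<in> space N. \<bar>F y - C\<bar> \<ge> x}"
  have expectation: "expectation (\<lambda>\<omega>. F (Y \<omega>)) = C"
    unfolding C_def by (rule integral_distr[OF Y F, symmetric])
  have preimage: "{\<omega> \<in> space M. \<bar>F (Y \<omega>) - C\<bar> \<ge> x} = Y -` S \<inter> space M"
    using measurable_space[OF Y] by (auto simp: S_def)
  have "S \<in> sets N"
    unfolding S_def using F by measurable
  show ?thesis
    unfolding expectation C_def[symmetric] S_def[symmetric] preimage
    by (rule measure_distr[OF Y \<open>S \<in> sets N\<close>, symmetric])
qed

lemma measurable_restrict_labels:
  assumes "finite I" "countable D" and label[measurable]: "label \<in> measurable Q (count_space D)"
  shows "(\<lambda>y. \<lambda>n\<in>I. label (y n)) \<in> measurable (PiM I (\<lambda>_. Q)) (count_space (PiE I (\<lambda>_. D)))"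
  unfolding measurable_count_space_eq_countable[OF countable_PiE[OF assms(1,2)]]
proof (intro conjI ballI)
  show "(\<lambda>y. \<lambda>n\<in>I. label (y n)) \<in> space (PiM I (\<lambda>_. Q)) \<rightarrow> PiE I (\<lambda>_. D)"
    using measurable_space[OF label] by (auto simp: space_PiM PiE_iff)
  fix w
  have "(\<lambda>y. \<lambda>n\<in>I. label (y n)) -` {w} \<inter> space (PiM I (\<lambda>_. Q))
      = {y \<in> space (PiM I (\<lambda>_. Q)). \<forall>n\<in>I. label (y n) = w n} \<inter> (if w \<in> extensional I then UNIV else {})"
    by (auto simp: fun_eq_iff extensional_def)
  also have "\<dots> \<in> sets (PiM I (\<lambda>_. Q))"
    using \<open>finite I\<close> by measurable
  finally show "(\<lambda>y. \<lambda>n\<in>I. label (y n)) -` {w} \<inter> space (PiM I (\<lambda>_. Q)) \<in> sets (PiM I (\<lambda>_. Q))" .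
qed

lemma measurable_cell_statistic_labels:
  assumes "countable D" "label \<in> measurable Q (count_space D)"
  shows "(\<lambda>y. cell_statistic N e \<Phi> (\<lambda>n. label (y n))) \<in> borel_measurable (PiM {1..N} (\<lambda>_. Q))"
proof -
  have "cell_statistic N e \<Phi> \<circ> (\<lambda>y. \<lambda>n\<in>{1..N}. label (y n)) \<in> borel_measurable (PiM {1..N} (\<lambda>_. Q))"
    by (rule measurable_comp[OF measurable_restrict_labels[OF _ assms] borel_measurable_count_space]) simp
  then show ?thesis
    unfolding comp_def by (simp only: cell_statistic_restrict)
qed

lemma (in prob_space) distr_restrict_iid:
  assumes indep: "indep_vars (\<lambda>_. Q) X UNIV" and distr: "\<And>n. distr M Q (X n) = \<mu>" and "I \<noteq> {}"
  shows "distr M (PiM I (\<lambda>_. Q)) (\<lambda>\<omega>. \<lambda>n\<in>I. X n \<omega>) = PiM I (\<lambda>_. \<mu>)"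
proof -
  have "X n \<in> measurable M Q" for n
    using indep unfolding indep_vars_def by auto
  then have "distr M (PiM I (\<lambda>_. Q)) (\<lambda>\<omega>. \<lambda>n\<in>I. X n \<omega>) = PiM I (\<lambda>n. distr M Q (X n))"
    using indep_vars_iff_distr_eq_PiM[where I = I and M' = "\<lambda>_. Q" and X = X] \<open>I \<noteq> {}\<close>
      indep_vars_subset[OF indep]
    by simp
  then show ?thesis
    by (simp add: distr)
qed

theorem cell_statistic_concentration:
  fixes X :: "nat \<Rightarrow> 'a \<Rightarrow> 'b" and label :: "'b \<Rightarrow> 'c option"
  assumes "prob_space M"
    and indep: "prob_space.indep_vars M (\<lambda>_. Q) X UNIV"
    and distr: "\<And>n. distr M Q (X n) = \<mu>"
    and label: "label \<in> measurable Q (count_space D)" and "countable D"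
    and "0 \<le> e" "e \<le> 1" "N \<ge> 1" "x > 0"
  shows "measure M {\<omega> \<in> space M.
            \<bar>cell_statistic N e \<Phi> (\<lambda>n. label (X n \<omega>))
              - (\<integral>\<omega>'. cell_statistic N e \<Phi> (\<lambda>n. label (X n \<omega>')) \<partial>M)\<bar> \<ge> x}
         \<le> 2 * exp (- 2 * real N * x\<^sup>2)"
proof -
  interpret prob_space M by fact
  define I where "I = {1..N}"
  define F where "F y = cell_statistic N e \<Phi> (\<lambda>n. label (y n))" for y :: "nat \<Rightarrow> 'b"
  define samples where "samples \<omega> = (\<lambda>n\<in>I. X n \<omega>)" for \<omega>
  have I: "finite I" "I \<noteq> {}" "card I = N"
    using \<open>N \<ge> 1\<close> by (auto simp: I_def)
  have X_meas: "X n \<in> measurable M Q" for n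
    using indep unfolding indep_vars_def by auto
  have "prob_space \<mu>" "sets \<mu> = sets Q"
    unfolding distr[of 0, symmetric] by (auto intro: prob_space_distr X_meas)
  have F_samples: "cell_statistic N e \<Phi> (\<lambda>n. label (X n \<omega>)) = F (samples \<omega>)" for \<omega>
    unfolding F_def samples_def I_def
    by (subst (1 2) cell_statistic_restrict[symmetric]) (simp cong: restrict_cong)
  have F_meas: "F \<in> borel_measurable (PiM I (\<lambda>_. Q))"
    unfolding F_def I_def by (rule measurable_cell_statistic_labels[OF \<open>countable D\<close> label])
  have F_diff: "\<bar>F (y(i := a)) - F (y(i := b))\<bar> \<le> 1 / real N" if "i \<in> I" for i y a b
  proof -
    have "(\<lambda>n. label ((y(i := a)) n)) = (\<lambda>n. label (y n))(i := label a)" for a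
      by auto
    then show ?thesis
      unfolding F_def using cell_statistic_bounded_differences \<open>0 \<le> e\<close> \<open>e \<le> 1\<close> that I_def by simp
  qed
  have "measure (PiM I (\<lambda>_. \<mu>)) {y \<in> space (PiM I (\<lambda>_. \<mu>)). \<bar>F y - (\<integral>y. F y \<partial>PiM I (\<lambda>_. \<mu>))\<bar> \<ge> x}
      \<le> 2 * exp (- 2 * x\<^sup>2 / ((1 / real N)\<^sup>2 * real (card I)))"
    using F_meas \<open>sets \<mu> = sets Q\<close>
    by (intro mcdiarmid_inequality[where c = "1 / real N"] \<open>prob_space \<mu>\<close> I(1,2) F_diff)
      (use \<open>N \<ge> 1\<close> \<open>x > 0\<close> in \<open>simp_all cong: measurable_cong_sets sets_PiM_cong\<close>)
  also have "- 2 * x\<^sup>2 / ((1 / real N)\<^sup>2 * real (card I)) = - 2 * real N * x\<^sup>2"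
    using I \<open>N \<ge> 1\<close> by (simp add: field_simps power2_eq_square)
  finally have bound: "measure (PiM I (\<lambda>_. \<mu>)) {y \<in> space (PiM I (\<lambda>_. \<mu>)).
      \<bar>F y - (\<integral>y. F y \<partial>PiM I (\<lambda>_. \<mu>))\<bar> \<ge> x} \<le> 2 * exp (- 2 * real N * x\<^sup>2)" .
  have "samples \<in> measurable M (PiM I (\<lambda>_. Q))"
    unfolding samples_def by (intro measurable_restrict X_meas)
  moreover have "distr M (PiM I (\<lambda>_. Q)) samples = PiM I (\<lambda>_. \<mu>)"
    unfolding samples_def by (rule distr_restrict_iid[OF indep distr I(2)])
  moreover have "space (PiM I (\<lambda>_. Q)) = space (PiM I (\<lambda>_. \<mu>))"
    using sets_eq_imp_space_eq[OF \<open>sets \<mu> = sets Q\<close>] by (simp add: space_PiM)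
  ultimately show ?thesis
    using bound unfolding F_samples by (simp add: deviation_prob_distr[OF _ F_meas])
qed

section \<open>The uniform and the non-uniform partition\<close>

lemma hbox_PiE: "hbox k s z = PiE {..<k} (\<lambda>i. {s * real_of_int (z i) ..< s * (real_of_int (z i) + 1)})"
  unfolding hbox_def by (auto simp: PiE_def Pi_def)

lemma sets_hbox: "hbox k s z \<in> sets (PiM {..<k} (\<lambda>_. borel))"
  unfolding hbox_PiE by (rule sets_PiM_I_finite) auto

lemma hbox_cong: "(\<And>i. i < k \<Longrightarrow> z i = z' i) \<Longrightarrow> hbox k s z = hbox k s z'"
  unfolding hbox_def by auto

lemma hbox_index_eq_floor:
  assumes "s > 0" "p \<in> hbox k s z" "i < k"
  shows "z i = \<lfloor>p i / s\<rfloor>"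
proof -
  from assms have "s * z i \<le> p i" "p i < s * (z i + 1)"
    unfolding hbox_def by auto
  with \<open>s > 0\<close> show ?thesis
    by (intro floor_unique[symmetric]) (simp_all add: field_simps)
qed

lemma hbox_eq_if_common_point:
  assumes "s > 0" "p \<in> hbox k s z" "p \<in> hbox k s z'"
  shows "hbox k s z = hbox k s z'"
  using hbox_index_eq_floor[OF assms(1,2)] hbox_index_eq_floor[OF assms(1,3)]
  by (intro hbox_cong) auto

lemma countable_range_hbox: "countable (range (hbox k s))"
proof -
  have "range (hbox k s) \<subseteq> hbox k s ` PiE {..<k} (\<lambda>_. UNIV)"
  proof
    fix G assume "G \<in> range (hbox k s)"
    then obtain z where "G = hbox k s z" by blast
    also have "\<dots> = hbox k s (restrict z {..<k})" by (rule hbox_cong) simp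
    finally show "G \<in> hbox k s ` PiE {..<k} (\<lambda>_. UNIV)" by simp
  qed
  then show ?thesis
    by (rule countable_subset) (simp add: countable_PiE)
qed

lemma disjoint_range_hbox: "s > 0 \<Longrightarrow> disjoint (range (hbox k s))"
  by (auto simp: disjoint_def disjnt_def dest: hbox_eq_if_common_point)

lemma countable_unif_part: "countable (unif_part d T N t)"
  unfolding unif_part_def using countable_range_hbox by (simp add: full_SetCompr_eq)

lemma unif_part_subset_sets: "unif_part d T N t \<subseteq> sets (PiM {..<d * t} (\<lambda>_. borel))"
  unfolding unif_part_def using sets_hbox by blast

lemma grid_m_pos: "N \<ge> 1 \<Longrightarrow> grid_m d T N > 0"
  unfolding grid_m_def by simp

lemma disjoint_unif_part: "N \<ge> 1 \<Longrightarrow> disjoint (unif_part d T N t)"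
  unfolding unif_part_def using disjoint_range_hbox grid_m_pos by (simp add: full_SetCompr_eq)

lemma closed_cube: "closed (cube k r)"
proof -
  have "cube k r = (\<Inter>i\<in>{..<k}. {y. - r \<le> y i \<and> y i \<le> r}) \<inter> (\<Inter>i\<in>-{..<k}. {y. y i = undefined})"
    by (auto simp: cube_def PiE_def extensional_def)
  moreover have "closed (\<Inter>i\<in>{..<k}. {y::nat \<Rightarrow> real. - r \<le> y i \<and> y i \<le> r})"
    by (intro closed_INT ballI closed_Collect_conj closed_Collect_le
        continuous_on_product_coordinates continuous_on_const)
  moreover have "closed (\<Inter>i\<in>-{..<k}. {y::nat \<Rightarrow> real. y i = undefined})"
    by (intro closed_INT ballI closed_Collect_eq continuous_on_product_coordinates continuous_on_const)
  ultimately show ?thesis by auto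
qed

lemma closure_annulus_subset_cube: "closure (annulus k j) \<subseteq> cube k (2 ^ j)"
  by (rule closure_minimal[OF _ closed_cube]) (auto simp: annulus_def)

lemma closure_annulus_disjoint_open_cube:
  assumes "j \<ge> 1"
  shows "{y. \<forall>i<k. \<bar>y i\<bar> < 2 ^ (j - 1)} \<inter> closure (annulus k j) = {}"
proof -
  have "{y::nat \<Rightarrow> real. \<forall>i<k. \<bar>y i\<bar> < 2 ^ (j - 1)} = (\<Inter>i\<in>{..<k}. {y. \<bar>y i\<bar> < 2 ^ (j - 1)})"
    by auto
  also have "open \<dots>"
    by (intro open_INT ballI open_Collect_less continuous_intros continuous_on_product_coordinates) auto
  finally have "open {y::nat \<Rightarrow> real. \<forall>i<k. \<bar>y i\<bar> < 2 ^ (j - 1)}" .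
  moreover have "{y. \<forall>i<k. \<bar>y i\<bar> < 2 ^ (j - 1)} \<inter> annulus k j = {}"
    using assms unfolding annulus_def cube_def by (auto simp: abs_less_iff)
  ultimately show ?thesis
    by (simp add: open_Int_closure_eq_empty)
qed

lemma cbox_cell_subset_cube_bounds:
  assumes "s > 0" "cbox_cell k s z \<subseteq> cube k r" "i < k"
  shows "- r \<le> s * z i" "s * (z i + 1) \<le> r"
proof -
  have "restrict (\<lambda>i. s * real_of_int (z i)) {..<k} \<in> cbox_cell k s z"
    "restrict (\<lambda>i. s * (real_of_int (z i) + 1)) {..<k} \<in> cbox_cell k s z"
    unfolding cbox_cell_def using \<open>s > 0\<close> by auto
  with assms(2,3) show "- r \<le> s * z i" "s * (z i + 1) \<le> r"
    unfolding cube_def by auto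
qed

text \<open>A common point p of cells of levels j < j' lies in the cube of radius 2^j \<le> 2^(j'-1).
  Clamping 0 into the closed level-j' cell then gives a point of that cell strictly inside the
  open cube of radius 2^(j'-1), which the closure of the j'-th annulus avoids.\<close>

lemma hbox_levels_disjoint:
  assumes "s > 0" "s' > 0" "j < j'"
    and level: "cbox_cell k s z \<subseteq> closure (annulus k j)"
    and level': "cbox_cell k s' z' \<subseteq> closure (annulus k j')"
  shows "hbox k s z \<inter> hbox k s' z' = {}"
proof (rule ccontr)
  assume "hbox k s z \<inter> hbox k s' z' \<noteq> {}"
  then obtain p where p: "p \<in> hbox k s z" "p \<in> hbox k s' z'" by blast
  define R :: real where "R = 2 ^ (j' - 1)"
  have "(2::real) ^ j \<le> R"
    unfolding R_def using \<open>j < j'\<close> by (intro power_increasing) auto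
  define y where "y = restrict (\<lambda>i. max (s' * z' i) (min (s' * (z' i + 1)) 0)) {..<k}"
  have "y \<in> cbox_cell k s' z'"
    unfolding cbox_cell_def y_def using \<open>s' > 0\<close> by auto
  moreover have "\<bar>y i\<bar> < R" if "i < k" for i
  proof -
    have "- (2 ^ j) \<le> s * z i" "s * (z i + 1) \<le> 2 ^ j"
      using cbox_cell_subset_cube_bounds[OF \<open>s > 0\<close> _ that] level closure_annulus_subset_cube
      by blast+
    moreover have "s * z i \<le> p i" "p i < s * (z i + 1)" "s' * z' i \<le> p i" "p i < s' * (z' i + 1)"
      using p that unfolding hbox_def by auto
    ultimately show ?thesis
      using \<open>2 ^ j \<le> R\<close> that unfolding y_def by (auto simp: max_def min_def)
  qed
  ultimately have "y \<in> {y. \<forall>i<k. \<bar>y i\<bar> < 2 ^ (j' - 1)} \<inter> closure (annulus k j')"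
    using level' unfolding R_def by auto
  with closure_annulus_disjoint_open_cube[of j' k] \<open>j < j'\<close> show False
    by auto
qed

lemma nonunif_part_eq:
  "nonunif_part d T N t = (\<Union>j. {hbox (d * t) (2 powi (int j - 1) / real (grid_m d T N)) z | z.
     cbox_cell (d * t) (2 powi (int j - 1) / real (grid_m d T N)) z \<subseteq> closure (annulus (d * t) j)})"
  unfolding nonunif_part_def by blast

lemma countable_nonunif_part: "countable (nonunif_part d T N t)"
  unfolding nonunif_part_eq
  by (intro countable_UN[OF _ countable_subset[OF _ countable_range_hbox]]) auto

lemma nonunif_part_subset_sets: "nonunif_part d T N t \<subseteq> sets (PiM {..<d * t} (\<lambda>_. borel))"
  unfolding nonunif_part_def using sets_hbox by blast

lemma disjoint_nonunif_part:
  assumes "N \<ge> 1"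
  shows "disjoint (nonunif_part d T N t)"
proof (rule pairwiseI)
  define s where "s j = (2::real) powi (int j - 1) / real (grid_m d T N)" for j :: nat
  have "s j > 0" for j
    unfolding s_def using grid_m_pos[OF assms] by simp
  fix G G' assume "G \<in> nonunif_part d T N t" "G' \<in> nonunif_part d T N t" "G \<noteq> G'"
  then obtain j z j' z'
    where G: "G = hbox (d * t) (s j) z" "cbox_cell (d * t) (s j) z \<subseteq> closure (annulus (d * t) j)"
      and G': "G' = hbox (d * t) (s j') z'" "cbox_cell (d * t) (s j') z' \<subseteq> closure (annulus (d * t) j')"
    unfolding nonunif_part_def s_def by blast
  consider "j < j'" | "j' < j" | "j = j'" by linarith
  then show "disjnt G G'"
  proof cases
    case 1
    from hbox_levels_disjoint[OF \<open>s j > 0\<close> \<open>s j' > 0\<close> this G(2) G'(2)] show ?thesis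
      unfolding G(1) G'(1) disjnt_def .
  next
    case 2
    from hbox_levels_disjoint[OF \<open>s j' > 0\<close> \<open>s j > 0\<close> this G'(2) G(2)] show ?thesis
      unfolding G(1) G'(1) disjnt_def by blast
  next
    case 3
    have False if "p \<in> G" "p \<in> G'" for p
      using hbox_eq_if_common_point[OF \<open>s j > 0\<close>, of p "d * t" z z'] that G(1) G'(1) 3 \<open>G \<noteq> G'\<close>
      by simp
    then show ?thesis
      unfolding disjnt_def by blast
  qed
qed

lemma Ytil_eq_cell_statistic:
  assumes "disjoint \<Phi>"
  shows "Ytil d t N \<Phi> X \<omega>
       = cell_statistic N (1 - 1 / real d) \<Phi> (\<lambda>n. cell_of \<Phi> (restrict (X n \<omega>) {..<d * t}))"
proof -
  have "real N * emp_meas d t N X \<omega> G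
      = real (cell_count N (\<lambda>n. cell_of \<Phi> (restrict (X n \<omega>) {..<d * t})) G)" if "G \<in> \<Phi>" for G
    using cell_of_eq_Some_iff[OF assms that] by (simp add: emp_meas_def cell_count_def)
  then show ?thesis
    unfolding Ytil_def cell_statistic_def by (simp cong: infsum_cong)
qed

theorem mainTheorem10:
  fixes d T N t :: nat and x :: real
    and \<mu> :: "(nat \<Rightarrow> real) measure" and M :: "'a measure"
    and X :: "nat \<Rightarrow> 'a \<Rightarrow> (nat \<Rightarrow> real)"
    and \<Phi> :: "(nat \<Rightarrow> real) set set"
  assumes "d \<ge> 1" and "T \<ge> 2"
    and "prob_space \<mu>"
    and "prob_space M"
    and "prob_space.indep_vars M (\<lambda>_. PiM {..<d * T} (\<lambda>_. borel)) X UNIV"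
    and "\<forall>n. distr M (PiM {..<d * T} (\<lambda>_. borel)) (X n) = \<mu>"
    and "1 \<le> t" and "t \<le> T - 1"
    and "N \<ge> 1"
    and "x > 0"
    and "\<Phi> = unif_part d T N t \<or> \<Phi> = nonunif_part d T N t"
  shows "measure M {\<omega> \<in> space M.
            \<bar>Ytil d t N \<Phi> X \<omega> - (\<integral>\<omega>'. Ytil d t N \<Phi> X \<omega>' \<partial>M)\<bar> \<ge> x}
         \<le> 2 * exp (- 2 * real N * x\<^sup>2)"
proof -
  have cells_countable: "countable \<Phi>"
    using assms(11) countable_unif_part countable_nonunif_part by (elim disjE) simp_all
  have cells_measurable: "\<Phi> \<subseteq> sets (PiM {..<d * t} (\<lambda>_. borel))"
    using assms(11) unif_part_subset_sets nonunif_part_subset_sets by (elim disjE) simp_all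
  have cells_disjoint: "disjoint \<Phi>"
    using assms(11) disjoint_unif_part[OF assms(9)] disjoint_nonunif_part[OF assms(9)]
    by (elim disjE) simp_all
  have "{..<d * t} \<subseteq> {..<d * T}"
    using assms(8) by auto
  then have label: "(\<lambda>p. cell_of \<Phi> (restrict p {..<d * t}))
      \<in> measurable (PiM {..<d * T} (\<lambda>_. borel)) (count_space (insert None (Some ` \<Phi>)))"
    using measurable_comp[OF measurable_restrict_subset
        measurable_cell_of[OF cells_countable cells_measurable cells_disjoint]]
    by (simp add: comp_def)
  show ?thesis
    unfolding Ytil_eq_cell_statistic[OF cells_disjoint]
    by (rule cell_statistic_concentration[OF assms(4,5) _ label])
      (use assms(1,6,9,10) cells_countable in auto)
qed

end
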